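(* Let $r\ge 0$, $t>0$, $\phi,b\in\mathbb{R}$ and $f(\theta)=-r\cos(2\theta t-\phi)+b$, with derivative $f'(\theta)=2rt\sin(2\theta t-\phi)$. Define the curvature function $$w(\theta)=\begin{cases}\dfrac{f'(\theta)}{\mathrm{mod}\!\big(\theta-\frac{\phi}{2t}+\frac{\pi}{2t},\frac{2\pi}{2t}\big)-\frac{\pi}{2t}} & \theta\notin\{\frac{\phi+2\pi m}{2t}:m\in\mathbb{Z}\},\\ 4t^2r & \theta\in\{\frac{\phi+2\pi m}{2t}:m\in\mathbb{Z}\},\end{cases}$$ where a $0/0$ (denominator equal to $0$, which forces $f'(\theta)=0$) is replaced by... — more precisely, whenever the denominator is nonzero use the quotient. Then for every $\theta'\in\mathbb{R}$ for which the denominator is nonzero or $\theta'\in\{\frac{\phi+2\pi m}{2t}\}$, the quadratic $$q(\theta;\theta')=f(\theta')+f'(\theta')(\theta-\theta')+\tfrac12 w(\theta')(\theta-\theta')^2$$ satisfies $q(\theta';\theta')=f(\theta')$ and $q(\theta;\theta')\ge f(\theta)$ for all $\theta\in\mathbb{R}$. Consequently, for $f_i(\theta)=-r_i\cos(2\theta t_i-\phi_i)+b_i$ ($i=1,\dots,T$, $r_i\ge0$, $t_i>0$) with corresponding $w_i$, if $\sum_iw_i(\theta')>0$ then $\theta^+=\theta'-\sum_if_i'(\theta')/\sum_iw_i(\theta')$ satisfies $\sum_if_i(\theta^+)\le\sum_if_i(\theta')$.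
   Context: For $a\in\mathbb{R}$, $p>0$, $\mathrm{mod}(a,p)=a-p\lfloor a/p\rfloor\in[0,p)$. The denominator in the first case of $w$ vanishes exactly when $\theta\in\{\frac{\phi+\pi+2\pi m}{2t}:m\in\mathbb{Z}\}$ (the maximizers of $f$), where $f'=0$; these points are excluded from the claim. *)

theory Defs
  imports Complex_Main
begin

definition rmod :: "real \<Rightarrow> real \<Rightarrow> real" where
  "rmod a p = a - p * of_int \<lfloor>a / p\<rfloor>"

definition fcos :: "real \<Rightarrow> real \<Rightarrow> real \<Rightarrow> real \<Rightarrow> real \<Rightarrow> real" where
  "fcos r t \<phi> b \<theta> = - r * cos (2 * \<theta> * t - \<phi>) + b"

definition fcos' :: "real \<Rightarrow> real \<Rightarrow> real \<Rightarrow> real \<Rightarrow> real" where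
  "fcos' r t \<phi> \<theta> = 2 * r * t * sin (2 * \<theta> * t - \<phi>)"

definition minset :: "real \<Rightarrow> real \<Rightarrow> real set" where
  "minset t \<phi> = {(\<phi> + 2 * pi * of_int m) / (2 * t) | m :: int. True}"

definition wden :: "real \<Rightarrow> real \<Rightarrow> real \<Rightarrow> real" where
  "wden t \<phi> \<theta> = rmod (\<theta> - \<phi> / (2 * t) + pi / (2 * t)) (2 * pi / (2 * t)) - pi / (2 * t)"

definition wcurv :: "real \<Rightarrow> real \<Rightarrow> real \<Rightarrow> real \<Rightarrow> real" where
  "wcurv r t \<phi> \<theta> =
     (if \<theta> \<in> minset t \<phi> then 4 * t^2 * r else fcos' r t \<phi> \<theta> / wden t \<phi> \<theta>)"

definition qmaj :: "real \<Rightarrow> real \<Rightarrow> real \<Rightarrow> real \<Rightarrow> real \<Rightarrow> real \<Rightarrow> real" where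
  "qmaj r t \<phi> b \<theta>' \<theta> = fcos r t \<phi> b \<theta>' + fcos' r t \<phi> \<theta>' * (\<theta> - \<theta>')
      + 1/2 * wcurv r t \<phi> \<theta>' * (\<theta> - \<theta>')^2"

end

(* Reducing the phase modulo 2 pi, write 2 theta' t - phi = v + 2 pi k with |v| <= pi; then the
   denominator of w is v / (2t) and w(theta') = 4 t^2 r sin v / v (read as 4 t^2 r when v = 0).
   In the variable y = 2 theta t - phi - 2 pi k the majorant q becomes, up to the affine map
   x |-> b + r x, the even parabola -cos v + sin v (y^2 - v^2) / (2v), which touches -cos at +-v and
   lies above it because sin y / y decreases on (0, pi]. Summing the majorants and minimising the
   summed parabola gives the descent step. *)
theory Submission imports Defs begin

lemma x_cos_le_sin:
  assumes "0 \<le> x" "x \<le> pi"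
  shows "x * cos x \<le> sin x"
proof -
  have "(\<lambda>x. x * cos x - sin x) x \<le> (\<lambda>x. x * cos x - sin x) 0"
  proof (rule DERIV_nonpos_imp_nonincreasing[OF assms(1)])
    fix y assume "0 \<le> y" "y \<le> x"
    then have "- y * sin y \<le> 0" using assms sin_ge_zero[of y] by simp
    moreover have "DERIV (\<lambda>x. x * cos x - sin x) y :> - y * sin y"
      by (auto intro!: derivative_eq_intros)
    ultimately show "\<exists>d. DERIV (\<lambda>x. x * cos x - sin x) y :> d \<and> d \<le> 0" by blast
  qed
  then show ?thesis by simp
qed

lemma sin_over_antimono:
  assumes "0 < a" "a \<le> b" "b \<le> pi"
  shows "sin b / b \<le> sin a / a"
proof (rule DERIV_nonpos_imp_nonincreasing[OF assms(2)])
  fix y assume y: "a \<le> y" "y \<le> b"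
  then have "y > 0" using assms by linarith
  then have "DERIV (\<lambda>x. sin x / x) y :> (y * cos y - sin y) / y\<^sup>2"
    by (auto intro!: derivative_eq_intros simp: power2_eq_square)
  moreover have "(y * cos y - sin y) / y\<^sup>2 \<le> 0"
    using x_cos_le_sin[of y] y assms by (simp add: divide_nonpos_pos)
  ultimately show "\<exists>d. DERIV (\<lambda>x. sin x / x) y :> d \<and> d \<le> 0" by blast
qed

lemma one_minus_cos_le: "1 - cos x \<le> (x::real)\<^sup>2 / 2"
proof -
  have "(sin (x / 2))\<^sup>2 \<le> (x / 2)\<^sup>2"
    using abs_sin_x_le_abs_x abs_le_square_iff by blast
  then show ?thesis using cos_double_sin[of "x / 2"] by (simp add: power_divide)
qed

text \<open>The derivative \<open>y (sin v / v - sin y / y)\<close> changes sign at \<open>v\<close> on \<open>[0, pi]\<close> because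
  \<open>sin y / y\<close> decreases there; beyond \<open>pi\<close> the quadratic term alone exceeds the value at \<open>pi\<close>.\<close>
lemma cos_plus_quadratic_min:
  assumes v: "0 < v" "v \<le> pi" and y: "0 \<le> y"
  shows "sin v / (2 * v) * v\<^sup>2 + cos v \<le> sin v / (2 * v) * y\<^sup>2 + cos y"
proof -
  define s where "s = sin v / (2 * v)"
  define F where "F x = s * x\<^sup>2 + cos x" for x
  have dF: "DERIV F x :> 2 * s * x - sin x" for x
    unfolding F_def by (auto intro!: derivative_eq_intros)
  have s_nonneg: "0 \<le> s" using sin_ge_zero[of v] v by (simp add: s_def)
  have below_v: "2 * s * x \<le> sin x" if "0 < x" "x \<le> v" for x
    using sin_over_antimono[of x v] that v by (simp add: s_def pos_le_divide_eq)
  have above_v: "sin x \<le> 2 * s * x" if "v \<le> x" "x \<le> pi" for x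
    using sin_over_antimono[of v x] that v by (simp add: s_def pos_divide_le_eq)
  have up_to_pi: "F v \<le> F x" if "v \<le> x" "x \<le> pi" for x
  proof (rule DERIV_nonneg_imp_nondecreasing[OF that(1)])
    fix z assume "v \<le> z" "z \<le> x"
    then show "\<exists>d. DERIV F z :> d \<and> 0 \<le> d" using dF above_v[of z] that by force
  qed
  consider "y \<le> v" | "v \<le> y" "y \<le> pi" | "pi < y" by linarith
  then have "F v \<le> F y"
  proof cases
    case 1
    show ?thesis
    proof (rule DERIV_nonpos_imp_nonincreasing[OF 1])
      fix x assume "y \<le> x" "x \<le> v"
      then have "2 * s * x \<le> sin x" using below_v[of x] y by (cases "x = 0") auto
      then show "\<exists>d. DERIV F x :> d \<and> d \<le> 0" using dF by force
    qed
  next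
    case 2
    then show ?thesis by (rule up_to_pi)
  next
    case 3
    have "F v \<le> F pi" using up_to_pi v by simp
    also have "\<dots> \<le> F y"
      using 3 s_nonneg mult_left_mono[OF power_mono[of pi y 2] s_nonneg]
      by (simp add: F_def) (smt (verit) cos_ge_minus_one pi_gt_zero)
    finally show ?thesis .
  qed
  then show ?thesis by (simp add: F_def s_def)
qed

lemma neg_cos_le_quadratic:
  assumes "\<bar>v\<bar> \<le> pi"
  shows "- cos y \<le> - cos v + sin v * (y - v) + 1/2 * (if v = 0 then 1 else sin v / v) * (y - v)\<^sup>2"
proof (cases "v = 0")
  case True
  then show ?thesis using one_minus_cos_le[of y] by simp
next
  case False
  have "cos v - cos y \<le> sin v / (2 * v) * (y\<^sup>2 - v\<^sup>2)"
  proof (cases "0 < v")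
    case True
    then show ?thesis
      using cos_plus_quadratic_min[of v "\<bar>y\<bar>"] assms by (simp add: right_diff_distrib)
  next
    case False
    then show ?thesis
      using cos_plus_quadratic_min[of "-v" "\<bar>y\<bar>"] assms \<open>v \<noteq> 0\<close> by (simp add: right_diff_distrib)
  qed
  moreover have "sin v * (y - v) + 1/2 * (sin v / v) * (y - v)\<^sup>2 = sin v / (2 * v) * (y\<^sup>2 - v\<^sup>2)"
    using False by (simp add: field_simps power2_eq_square)
  ultimately show ?thesis using False by simp
qed

lemma rmod_bounds:
  assumes "0 < p"
  shows "0 \<le> rmod a p" "rmod a p < p"
proof -
  have "of_int \<lfloor>a / p\<rfloor> \<le> a / p" "a / p < of_int \<lfloor>a / p\<rfloor> + 1" by linarith+
  then have "of_int \<lfloor>a / p\<rfloor> * p \<le> a" "a < p * of_int \<lfloor>a / p\<rfloor> + p"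
    using assms by (simp_all add: field_simps le_divide_eq)
  then show "0 \<le> rmod a p" "rmod a p < p" by (auto simp: rmod_def mult.commute)
qed

lemma wden_reduced_phase:
  assumes t: "0 < t"
  obtains k :: int where "\<bar>2 * \<theta> * t - \<phi> - 2 * pi * k\<bar> \<le> pi"
    and "wden t \<phi> \<theta> = (2 * \<theta> * t - \<phi> - 2 * pi * k) / (2 * t)"
proof
  define a where "a = \<theta> - \<phi> / (2 * t) + pi / (2 * t)"
  define p where "p = 2 * pi / (2 * t)"
  define k where "k = \<lfloor>a / p\<rfloor>"
  have "rmod a p = a - p * k" unfolding rmod_def k_def ..
  also have "\<dots> = (2 * \<theta> * t - \<phi> - 2 * pi * k + pi) / (2 * t)"
    unfolding a_def p_def using t by (simp add: field_simps)
  finally have rmod_eq: "rmod a p = (2 * \<theta> * t - \<phi> - 2 * pi * k + pi) / (2 * t)" .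
  then show "wden t \<phi> \<theta> = (2 * \<theta> * t - \<phi> - 2 * pi * k) / (2 * t)"
    unfolding wden_def a_def[symmetric] p_def[symmetric] using t by (simp add: field_simps)
  have "0 < p" using t by (simp add: p_def)
  then have lower: "0 \<le> (2 * \<theta> * t - \<phi> - 2 * pi * k + pi) / (2 * t)"
    and upper: "(2 * \<theta> * t - \<phi> - 2 * pi * k + pi) / (2 * t) < 2 * pi / (2 * t)"
    using rmod_bounds[of p a] unfolding rmod_eq p_def[symmetric] by auto
  have "0 \<le> 2 * \<theta> * t - \<phi> - 2 * pi * k + pi"
    using lower t by (simp add: zero_le_divide_iff)
  moreover have "2 * \<theta> * t - \<phi> - 2 * pi * k + pi < 2 * pi"
    using upper t by (simp only: divide_less_cancel)
  ultimately show "\<bar>2 * \<theta> * t - \<phi> - 2 * pi * k\<bar> \<le> pi" by linarith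
qed

lemma fcos_le_qmaj_at_phase:
  fixes k :: int and t \<phi> \<theta>' :: real
  defines "v \<equiv> 2 * \<theta>' * t - \<phi> - 2 * pi * k"
  assumes r: "0 \<le> r" and t: "0 < t" and v: "\<bar>v\<bar> \<le> pi"
    and w: "wcurv r t \<phi> \<theta>' = 4 * t\<^sup>2 * r * (if v = 0 then 1 else sin v / v)"
  shows "fcos r t \<phi> b \<theta> \<le> qmaj r t \<phi> b \<theta>' \<theta>"
proof -
  define y where "y = 2 * \<theta> * t - \<phi> - 2 * pi * k"
  define c where "c = (if v = 0 then 1 else sin v / v)"
  have shift: "cos (x - 2 * pi * k) = cos x" "sin (x - 2 * pi * k) = sin x" for x
    by (simp_all add: cos_diff sin_diff)
  have at_\<theta>': "cos (2 * \<theta>' * t - \<phi>) = cos v" "sin (2 * \<theta>' * t - \<phi>) = sin v"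
    by (simp_all only: v_def shift)
  have at_\<theta>: "cos (2 * \<theta> * t - \<phi>) = cos y"
    by (simp only: y_def shift)
  have step: "\<theta> - \<theta>' = (y - v) / (2 * t)"
    unfolding y_def v_def using t by (simp add: field_simps)
  have linear: "2 * r * t * sin v * ((y - v) / (2 * t)) = r * (sin v * (y - v))"
    and quadratic: "1/2 * (4 * t\<^sup>2 * r * c) * ((y - v) / (2 * t))\<^sup>2 = r * (1/2 * c * (y - v)\<^sup>2)"
    using t by (simp_all add: power_divide power_mult_distrib)
  have "qmaj r t \<phi> b \<theta>' \<theta> = b + r * (- cos v + sin v * (y - v) + 1/2 * c * (y - v)\<^sup>2)"
    unfolding qmaj_def fcos_def fcos'_def w c_def[symmetric] at_\<theta>' step linear quadratic
    by (simp add: algebra_simps)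
  then show ?thesis
    using mult_left_mono[OF neg_cos_le_quadratic[OF v, of y] r]
    unfolding fcos_def at_\<theta> c_def by simp
qed

text \<open>The side condition of the paper, \<open>wden t \<phi> \<theta>' \<noteq> 0 \<or> \<theta>' \<in> minset t \<phi>\<close>, always holds
  (\<open>wden\<close> vanishes exactly on \<open>minset\<close>).\<close>
lemma fcos_le_qmaj:
  assumes r: "0 \<le> r" and t: "0 < t"
  shows "fcos r t \<phi> b \<theta> \<le> qmaj r t \<phi> b \<theta>' \<theta>"
proof (cases "\<theta>' \<in> minset t \<phi>")
  case True
  then obtain m :: int where "\<theta>' = (\<phi> + 2 * pi * m) / (2 * t)"
    unfolding minset_def by auto
  then have "2 * \<theta>' * t - \<phi> - 2 * pi * m = 0" using t by (simp add: field_simps)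
  moreover have "wcurv r t \<phi> \<theta>' = 4 * t\<^sup>2 * r" using True by (simp add: wcurv_def)
  ultimately show ?thesis using fcos_le_qmaj_at_phase[OF r t, of \<theta>' \<phi> m] by simp
next
  case False
  obtain k :: int where v_bound: "\<bar>2 * \<theta>' * t - \<phi> - 2 * pi * k\<bar> \<le> pi"
    and wden: "wden t \<phi> \<theta>' = (2 * \<theta>' * t - \<phi> - 2 * pi * k) / (2 * t)"
    using wden_reduced_phase[OF t] .
  define v where "v = 2 * \<theta>' * t - \<phi> - 2 * pi * k"
  have "v \<noteq> 0"
  proof
    assume "v = 0"
    then have "\<theta>' = (\<phi> + 2 * pi * k) / (2 * t)" using t by (simp add: v_def field_simps)
    with False show False unfolding minset_def by auto
  qed
  have "sin (2 * \<theta>' * t - \<phi>) = sin v" by (simp add: v_def sin_diff)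
  then have "wcurv r t \<phi> \<theta>' = 4 * t\<^sup>2 * r * (sin v / v)"
    using False t \<open>v \<noteq> 0\<close> unfolding wcurv_def fcos'_def wden v_def[symmetric]
    by (simp add: field_simps power2_eq_square)
  then show ?thesis
    using fcos_le_qmaj_at_phase[OF r t, of \<theta>' \<phi> k] v_bound \<open>v \<noteq> 0\<close> by (simp add: v_def)
qed

lemma qmaj_at_center: "qmaj r t \<phi> b \<theta>' \<theta>' = fcos r t \<phi> b \<theta>'"
  by (simp add: qmaj_def)

lemma quadratic_majorant_descent:
  fixes f :: "'i \<Rightarrow> real \<Rightarrow> real" and g w :: "'i \<Rightarrow> real"
  assumes majorant: "\<And>i y. i \<in> I \<Longrightarrow> f i y \<le> f i x + g i * (y - x) + 1/2 * w i * (y - x)\<^sup>2"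
    and curv_pos: "0 < (\<Sum>i\<in>I. w i)"
  shows "(\<Sum>i\<in>I. f i (x - (\<Sum>i\<in>I. g i) / (\<Sum>i\<in>I. w i))) \<le> (\<Sum>i\<in>I. f i x)"
proof -
  define G W where "G = (\<Sum>i\<in>I. g i)" and "W = (\<Sum>i\<in>I. w i)"
  define y where "y = x - G / W"
  have "(\<Sum>i\<in>I. f i y) \<le> (\<Sum>i\<in>I. f i x + g i * (y - x) + 1/2 * w i * (y - x)\<^sup>2)"
    using majorant by (rule sum_mono)
  also have "\<dots> = (\<Sum>i\<in>I. f i x) + G * (y - x) + 1/2 * W * (y - x)\<^sup>2"
    by (simp add: G_def W_def sum.distrib sum_distrib_right sum_distrib_left)
  also have "\<dots> = (\<Sum>i\<in>I. f i x) - G\<^sup>2 / (2 * W)"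
    using curv_pos by (simp add: y_def W_def[symmetric] field_simps power2_eq_square)
  also have "\<dots> \<le> (\<Sum>i\<in>I. f i x)"
    using curv_pos by (simp add: W_def[symmetric])
  finally show ?thesis by (simp add: y_def G_def W_def)
qed

theorem mainTheorem3:
  shows "(\<forall>r t \<phi> b \<theta>'. r \<ge> 0 \<and> t > 0 \<and> (wden t \<phi> \<theta>' \<noteq> 0 \<or> \<theta>' \<in> minset t \<phi>) \<longrightarrow>
            qmaj r t \<phi> b \<theta>' \<theta>' = fcos r t \<phi> b \<theta>' \<and>
            (\<forall>\<theta>. qmaj r t \<phi> b \<theta>' \<theta> \<ge> fcos r t \<phi> b \<theta>))
       \<and> (\<forall>(T::nat) (rs::nat \<Rightarrow> real) (ts::nat \<Rightarrow> real) (\<phi>s::nat \<Rightarrow> real) (bs::nat \<Rightarrow> real) \<theta>'.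
            (\<forall>i\<in>{1..T}. rs i \<ge> 0 \<and> ts i > 0 \<and>
                 (wden (ts i) (\<phi>s i) \<theta>' \<noteq> 0 \<or> \<theta>' \<in> minset (ts i) (\<phi>s i))) \<and>
            (\<Sum>i=1..T. wcurv (rs i) (ts i) (\<phi>s i) \<theta>') > 0 \<longrightarrow>
            (let \<theta>p = \<theta>' - (\<Sum>i=1..T. fcos' (rs i) (ts i) (\<phi>s i) \<theta>')
                              / (\<Sum>i=1..T. wcurv (rs i) (ts i) (\<phi>s i) \<theta>')
             in (\<Sum>i=1..T. fcos (rs i) (ts i) (\<phi>s i) (bs i) \<theta>p)
                  \<le> (\<Sum>i=1..T. fcos (rs i) (ts i) (\<phi>s i) (bs i) \<theta>')))"
proof (intro conjI allI impI)
  fix r t \<phi> b \<theta>' \<theta> :: real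
  assume "r \<ge> 0 \<and> t > 0 \<and> (wden t \<phi> \<theta>' \<noteq> 0 \<or> \<theta>' \<in> minset t \<phi>)"
  then show "fcos r t \<phi> b \<theta> \<le> qmaj r t \<phi> b \<theta>' \<theta>" by (simp add: fcos_le_qmaj)
  show "qmaj r t \<phi> b \<theta>' \<theta>' = fcos r t \<phi> b \<theta>'" by (rule qmaj_at_center)
next
  fix T :: nat and rs ts \<phi>s bs :: "nat \<Rightarrow> real" and \<theta>' :: real
  assume H: "(\<forall>i\<in>{1..T}. rs i \<ge> 0 \<and> ts i > 0 \<and>
                 (wden (ts i) (\<phi>s i) \<theta>' \<noteq> 0 \<or> \<theta>' \<in> minset (ts i) (\<phi>s i))) \<and>
            (\<Sum>i=1..T. wcurv (rs i) (ts i) (\<phi>s i) \<theta>') > 0"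
  have "(\<Sum>i=1..T. fcos (rs i) (ts i) (\<phi>s i) (bs i) (\<theta>' - (\<Sum>i=1..T. fcos' (rs i) (ts i) (\<phi>s i) \<theta>')
          / (\<Sum>i=1..T. wcurv (rs i) (ts i) (\<phi>s i) \<theta>')))
        \<le> (\<Sum>i=1..T. fcos (rs i) (ts i) (\<phi>s i) (bs i) \<theta>')"
    using H fcos_le_qmaj by (intro quadratic_majorant_descent) (auto simp: qmaj_def)
  then show "let \<theta>p = \<theta>' - (\<Sum>i=1..T. fcos' (rs i) (ts i) (\<phi>s i) \<theta>')
                              / (\<Sum>i=1..T. wcurv (rs i) (ts i) (\<phi>s i) \<theta>')
             in (\<Sum>i=1..T. fcos (rs i) (ts i) (\<phi>s i) (bs i) \<theta>p)
                  \<le> (\<Sum>i=1..T. fcos (rs i) (ts i) (\<phi>s i) (bs i) \<theta>')"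
    unfolding Let_def .
qed

end
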